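(* Let $(\Gamma,\gamma)$ be a spin network and let $(\Gamma',\gamma)$ be obtained by reversing the cyclic ordering at one vertex whose incident edges have colors $a,b,c$ (the underlying graph and coloring unchanged). Then $$\langle\Gamma',\gamma\rangle^P=(-1)^{(a(a-1)+b(b-1)+c(c-1))/2}\,\langle\Gamma,\gamma\rangle^P,$$ and the same relation holds for the standard evaluation $\langle\cdot\rangle$.
   Context: A cubic ribbon graph $\Gamma$ is a finite graph all of whose vertices are trivalent (multiple edges and loops are allowed, as are components that are circles without vertices), together with a cyclic ordering of the three edge-ends at each vertex. A coloring $\gamma$ assigns to each edge $e\in E(\Gamma)$ a natural number $\gamma_e$; the pair $(\Gamma,\gamma)$ is a spin network. It is admissible if at every vertex with incident colors $a,b,c$ the sum $a+b+c$ is even and $|a-b|\le c\le a+b$. The Penrose evaluation $\langle\Gamma,\gamma\rangle^P$ is $0$ if $(\Gamma,\gamma)$ is not admissible; otherwise thicken $\Gamma$ into a surface using the cyclic orderings (vertices become disks, edges become untwisted bands), replace each edge colored $a$ by $a$ parallel strands in its band with the antisymmetrizer $\sum_{\sigma\in S_a}\mathrm{sgn}(\sigma)\sigma$ inserted, and in the disk of each vertex with incident colors $a,b,c$ join $(a+b-c)/2$ strands of the $a$-edge to the $b$-edge, $(a-b+c)/2$ strands of the $a$-edge to the $c$-edge and $(-a+b+c)/2$ strands of the $b$-edge to the $c$-edge by pairwise non-crossing arcs; expanding gives a signed sum of collections of closed loops, and a collection of $n$ loops is assigned the value $(-2)^n$. The (standard) evaluation is $\langle\Gamma,\gamma\rangle=\langle\Gamma,\gamma\rangle^P/\mathcal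 I!$, where $\mathcal I!=\prod_{v\in V(\Gamma)}\big(\tfrac{-a_v+b_v+c_v}{2}\big)!\big(\tfrac{a_v-b_v+c_v}{2}\big)!\big(\tfrac{a_v+b_v-c_v}{2}\big)!$ and $a_v,b_v,c_v$ are the colors of the edges at $v$ (and $\langle\Gamma,\gamma\rangle=0$ if not admissible). *)

theory Defs
  imports Complex_Main "HOL-Combinatorics.Permutations"
begin

text \<open>
  Each edge e has two ends (half-edges, darts) (e,True) and (e,False); loops and
  multiple edges are thereby allowed.  The cyclic orderings at the vertices are
  given by a permutation sigma of the darts all of whose orbits have length 3:
  each orbit is a vertex, and sigma sends each edge-end at a vertex to the next
  one in the cyclic order.  Circle components without vertices are recorded
  separately, as a list of their colors.
\<close>

definition darts :: "'e set \<Rightarrow> ('e \<times> bool) set" where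
  "darts E = E \<times> UNIV"

definition cubic_ribbon_graph :: "'e set \<Rightarrow> ('e \<times> bool \<Rightarrow> 'e \<times> bool) \<Rightarrow> bool" where
  "cubic_ribbon_graph E \<sigma> \<longleftrightarrow>
     finite E \<and> \<sigma> permutes darts E \<and>
     (\<forall>x\<in>darts E. \<sigma> x \<noteq> x \<and> \<sigma> (\<sigma> (\<sigma> x)) = x)"

definition vertices :: "'e set \<Rightarrow> ('e \<times> bool \<Rightarrow> 'e \<times> bool) \<Rightarrow> ('e \<times> bool) set set" where
  "vertices E \<sigma> = (\<lambda>x. {x, \<sigma> x, \<sigma> (\<sigma> x)}) ` darts E"

definition reverse_at :: "('e \<times> bool \<Rightarrow> 'e \<times> bool) \<Rightarrow> 'e \<times> bool \<Rightarrow> ('e \<times> bool \<Rightarrow> 'e \<times> bool)" where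
  "reverse_at \<sigma> x0 = (\<lambda>x. if x \<in> {x0, \<sigma> x0, \<sigma> (\<sigma> x0)} then \<sigma> (\<sigma> x) else \<sigma> x)"

definition admissible :: "'e set \<Rightarrow> ('e \<times> bool \<Rightarrow> 'e \<times> bool) \<Rightarrow> ('e \<Rightarrow> nat) \<Rightarrow> bool" where
  "admissible E \<sigma> col \<longleftrightarrow>
     (\<forall>x\<in>darts E.
        let a = col (fst x); b = col (fst (\<sigma> x)); c = col (fst (\<sigma> (\<sigma> x)))
        in even (a + b + c) \<and> \<bar>int a - int b\<bar> \<le> int c \<and> c \<le> a + b)"

text \<open>Number of arcs in the disk of the vertex of x joining the strands of the
  dart x to those of the next dart sigma x: (a+b-c)/2.\<close>
definition arcs :: "('e \<times> bool \<Rightarrow> 'e \<times> bool) \<Rightarrow> ('e \<Rightarrow> nat) \<Rightarrow> 'e \<times> bool \<Rightarrow> nat" where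
  "arcs \<sigma> col x = (col (fst x) + col (fst (\<sigma> x)) - col (fst (\<sigma> (\<sigma> x)))) div 2"

text \<open>Strand endpoints: the edge-end x of an edge colored a carries the points
  (x,0),...,(x,a-1), numbered in the counterclockwise order of the boundary of
  the vertex disk.\<close>
definition strand_points :: "'e set \<Rightarrow> ('e \<Rightarrow> nat) \<Rightarrow> (('e \<times> bool) \<times> nat) set" where
  "strand_points E col = {(x, i). x \<in> darts E \<and> i < col (fst x)}"

definition rflip :: "nat \<Rightarrow> nat \<Rightarrow> nat" where
  "rflip a i = (if i < a then a - 1 - i else i)"

text \<open>Strands inside the (untwisted) band of each edge e, with the permutation
  pi e inserted: point i at the end (e,True) is joined to point
  rflip (col e) (pi e i) at the end (e,False); pi e = id gives parallel strands
  (the numbering is reversed between the two ends of an untwisted band).\<close>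
definition edge_strands :: "'e set \<Rightarrow> ('e \<Rightarrow> nat) \<Rightarrow> ('e \<Rightarrow> nat \<Rightarrow> nat)
    \<Rightarrow> ((('e \<times> bool) \<times> nat) \<times> (('e \<times> bool) \<times> nat)) set" where
  "edge_strands E col \<pi> =
     {(((e, True), i), ((e, False), rflip (col e) (\<pi> e i))) | e i. e \<in> E \<and> i < col e}"

text \<open>Non-crossing arcs in the vertex disks: the last arcs sigma col x strands of
  the dart x are joined to the first ones of the dart sigma x.\<close>
definition vertex_arcs :: "'e set \<Rightarrow> ('e \<times> bool \<Rightarrow> 'e \<times> bool) \<Rightarrow> ('e \<Rightarrow> nat)
    \<Rightarrow> ((('e \<times> bool) \<times> nat) \<times> (('e \<times> bool) \<times> nat)) set" where
  "vertex_arcs E \<sigma> col =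
     {((x, col (fst x) - 1 - k), (\<sigma> x, k)) | x k. x \<in> darts E \<and> k < arcs \<sigma> col x}"

definition num_loops :: "'e set \<Rightarrow> ('e \<times> bool \<Rightarrow> 'e \<times> bool) \<Rightarrow> ('e \<Rightarrow> nat)
    \<Rightarrow> ('e \<Rightarrow> nat \<Rightarrow> nat) \<Rightarrow> nat" where
  "num_loops E \<sigma> col \<pi> =
     (let R = edge_strands E col \<pi> \<union> vertex_arcs E \<sigma> col
      in card (strand_points E col // ((R \<union> R\<inverse>)\<^sup>*)))"

definition edge_perms :: "'e set \<Rightarrow> ('e \<Rightarrow> nat) \<Rightarrow> ('e \<Rightarrow> nat \<Rightarrow> nat) set" where
  "edge_perms E col =
     {\<pi>. (\<forall>e\<in>E. \<pi> e permutes {..<col e}) \<and> (\<forall>e. e \<notin> E \<longrightarrow> \<pi> e = id)}"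

text \<open>A circle component colored a: its antisymmetrizer closed up; the loops
  are the cycles of the permutation.\<close>
definition circle_value :: "nat \<Rightarrow> int" where
  "circle_value a =
     (\<Sum>p | p permutes {..<a}.
        sign p * (-2) ^ (let R = {(i, p i) | i. i < a} in card ({..<a} // ((R \<union> R\<inverse>)\<^sup>*))))"

definition penrose_eval :: "'e set \<Rightarrow> ('e \<times> bool \<Rightarrow> 'e \<times> bool) \<Rightarrow> ('e \<Rightarrow> nat) \<Rightarrow> nat list \<Rightarrow> int" where
  "penrose_eval E \<sigma> col circ =
     (if admissible E \<sigma> col then
        (\<Sum>\<pi>\<in>edge_perms E col. (\<Prod>e\<in>E. sign (\<pi> e)) * (-2) ^ num_loops E \<sigma> col \<pi>)
          * (\<Prod>a\<leftarrow>circ. circle_value a)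
      else 0)"

definition I_fact :: "'e set \<Rightarrow> ('e \<times> bool \<Rightarrow> 'e \<times> bool) \<Rightarrow> ('e \<Rightarrow> nat) \<Rightarrow> nat" where
  "I_fact E \<sigma> col = (\<Prod>v\<in>vertices E \<sigma>. \<Prod>x\<in>v. fact (arcs \<sigma> col x))"

definition std_eval :: "'e set \<Rightarrow> ('e \<times> bool \<Rightarrow> 'e \<times> bool) \<Rightarrow> ('e \<Rightarrow> nat) \<Rightarrow> nat list \<Rightarrow> rat" where
  "std_eval E \<sigma> col circ =
     (if admissible E \<sigma> col then of_int (penrose_eval E \<sigma> col circ) / of_nat (I_fact E \<sigma> col)
      else 0)"

end

theory Submission
  imports Defs
begin

(*
  Reversing the cyclic order at the vertex v = {x0, sigma x0, sigma^2 x0} changes the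
  Penrose evaluation only by the signs of three antisymmetrizers.

  Reversal swaps the roles of "next" and "previous" dart at v, so in the disk of v the
  arcs are attached to the opposite ends of the strand bundles.  Renumbering the strand
  endpoints at each of the three darts of v in reverse order (the map relabel) turns the
  strand diagram of (reverse_at sigma x0, pi') into that of (sigma, pi), where pi' is pi
  conjugated by these reversals (conj_perms).  Hence the number of loops is preserved,
  while the sign of the edge permutations changes by sign (rflip n) = (-1)^(n(n-1)/2)
  for each of the three darts of colour n.  Since pi |-> pi' is a bijection of the
  summation range, the Penrose evaluation picks up exactly this sign.  Admissibility,
  the vertex set and the factor I! are unchanged by reversal, which gives the claim for
  the standard evaluation.
*)

lemma map_prod_converse: "map_prod f f ` (S\<inverse>) = (map_prod f f ` S)\<inverse>"
  by (auto simp: image_iff)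

lemma image_rtrancl_subset: "map_prod f f ` (r\<^sup>*) \<subseteq> (map_prod f f ` r)\<^sup>*"
proof clarify
  fix x y assume "(x, y) \<in> r\<^sup>*"
  then show "(f x, f y) \<in> (map_prod f f ` r)\<^sup>*"
    by induction (auto intro: rtrancl_into_rtrancl)
qed

lemma rtrancl_image_bij:
  assumes "bij f"
  shows "(map_prod f f ` r)\<^sup>* = map_prod f f ` (r\<^sup>*)"
proof
  let ?F = "map_prod f f" and ?G = "map_prod (inv f) (inv f)"
  have GF: "?G ` ?F ` s = s" for s
    using bij_is_inj[OF assms] by (simp add: image_comp map_prod.comp inj_iff[THEN iffD1] map_prod.id)
  have FG: "?F ` ?G ` s = s" for s
    using bij_is_surj[OF assms] by (simp add: image_comp map_prod.comp surj_iff[THEN iffD1] map_prod.id)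
  have "(?F ` r)\<^sup>* = ?F ` ?G ` (?F ` r)\<^sup>*" by (rule FG[symmetric])
  also have "\<dots> \<subseteq> ?F ` (?G ` ?F ` r)\<^sup>*" by (intro image_mono image_rtrancl_subset)
  finally show "(?F ` r)\<^sup>* \<subseteq> ?F ` r\<^sup>*" by (simp only: GF)
qed (rule image_rtrancl_subset)

lemma card_quotient_image_bij:
  assumes "bij f"
  shows "card ((f ` A) // (map_prod f f ` r)) = card (A // r)"
proof -
  have inj: "inj f" using assms by (rule bij_is_inj)
  have "(map_prod f f ` r) `` {f x} = f ` (r `` {x})" for x
    using inj by (auto simp: inj_eq image_iff)
  then have "(f ` A) // (map_prod f f ` r) = image f ` (A // r)"
    unfolding quotient_def by auto
  moreover have "inj_on (image f) (A // r)"
    using inj by (simp add: inj_on_def inj_image_eq_iff)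
  ultimately show ?thesis by (simp add: card_image)
qed

lemma rflip_rflip [simp]: "rflip n (rflip n i) = i"
  by (simp add: rflip_def)

lemma rflip_less_iff [simp]: "rflip n i < n \<longleftrightarrow> i < n"
  by (simp add: rflip_def)

lemma rflip_permutes: "rflip n permutes {..<n}"
proof (rule bij_imp_permutes)
  show "bij_betw (rflip n) {..<n} {..<n}"
    by (rule bij_betwI[where g="rflip n"]) auto
qed (simp add: rflip_def)

text \<open>The cyclic shift 0 -> 1 -> ... -> n -> 0, a product of n transpositions.  It
  relates the reversals of {0..<n} and {0..n}, and yields the sign of the reversal.\<close>

definition cyclic_shift :: "nat \<Rightarrow> nat \<Rightarrow> nat" where
  "cyclic_shift n i = (if i < n then i + 1 else if i = n then 0 else i)"

lemma cyclic_shift_Suc: "cyclic_shift (Suc m) = cyclic_shift m \<circ> Transposition.transpose m (Suc m)"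
  by (rule ext) (auto simp: cyclic_shift_def Transposition.transpose_def)

lemma sign_cyclic_shift: "permutation (cyclic_shift n) \<and> sign (cyclic_shift n) = (-1) ^ n"
proof (induction n)
  case 0
  have "cyclic_shift 0 = id" by (rule ext) (simp add: cyclic_shift_def)
  then show ?case by simp
next
  case (Suc m)
  let ?t = "Transposition.transpose m (Suc m)"
  have t: "permutation ?t" "sign ?t = -1" by (simp_all add: permutation_swap_id sign_swap_id)
  have "permutation (cyclic_shift m \<circ> ?t)" using Suc.IH t by (simp add: permutation_compose)
  moreover have "sign (cyclic_shift m \<circ> ?t) = - ((-1) ^ m)" using Suc.IH t by (simp add: sign_compose)
  ultimately show ?case by (simp only: cyclic_shift_Suc) simp
qed

lemma rflip_Suc: "rflip (Suc n) = cyclic_shift n \<circ> rflip n"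
  by (rule ext) (auto simp: cyclic_shift_def rflip_def)

lemma sign_rflip: "sign (rflip n) = (-1) ^ (n * (n - 1) div 2)"
proof (induction n)
  case 0
  have "rflip 0 = id" by (rule ext) (simp add: rflip_def)
  then show ?case by simp
next
  case (Suc n)
  have "permutation (rflip n)"
    using rflip_permutes finite_lessThan by (rule permutes_imp_permutation[rotated])
  then have "sign (rflip (Suc n)) = (-1) ^ n * (-1) ^ (n * (n - 1) div 2)"
    using sign_cyclic_shift[of n] Suc.IH by (simp add: rflip_Suc sign_compose)
  also have "\<dots> = (-1) ^ (n + n * (n - 1) div 2)"
    by (simp add: power_add)
  also have "n + n * (n - 1) div 2 = Suc n * (Suc n - 1) div 2"
    by (cases n) simp_all
  finally show ?case .
qed

definition renumber :: "('e \<times> bool) set \<Rightarrow> ('e \<Rightarrow> nat) \<Rightarrow> 'e \<times> bool \<Rightarrow> nat \<Rightarrow> nat" where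
  "renumber V col d = (if d \<in> V then rflip (col (fst d)) else id)"

definition relabel :: "('e \<times> bool) set \<Rightarrow> ('e \<Rightarrow> nat) \<Rightarrow> ('e \<times> bool) \<times> nat \<Rightarrow> ('e \<times> bool) \<times> nat" where
  "relabel V col = (\<lambda>(d, i). (d, renumber V col d i))"

definition conj_perms :: "('e \<times> bool) set \<Rightarrow> ('e \<Rightarrow> nat) \<Rightarrow> ('e \<Rightarrow> nat \<Rightarrow> nat) \<Rightarrow> 'e \<Rightarrow> nat \<Rightarrow> nat" where
  "conj_perms V col \<pi> = (\<lambda>e. renumber V col (e, False) \<circ> \<pi> e \<circ> renumber V col (e, True))"

lemma renumber_renumber [simp]: "renumber V col d (renumber V col d i) = i"
  by (simp add: renumber_def)

lemma renumber_less_iff [simp]: "renumber V col (e, b) i < col e \<longleftrightarrow> i < col e"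
  by (simp add: renumber_def)

lemma renumber_rflip: "renumber V col (e, b) (rflip (col e) i) = rflip (col e) (renumber V col (e, b) i)"
  by (simp add: renumber_def)

lemma renumber_permutes: "renumber V col d permutes {..<col (fst d)}"
  by (simp add: renumber_def rflip_permutes permutes_id)

lemma sign_renumber:
  "sign (renumber V col d) = (if d \<in> V then (-1) ^ (col (fst d) * (col (fst d) - 1) div 2) else 1)"
  by (simp add: renumber_def sign_rflip)

lemma relabel_apply [simp]: "relabel V col (d, i) = (d, renumber V col d i)"
  by (simp add: relabel_def)

lemma relabel_relabel [simp]: "relabel V col (relabel V col p) = p"
  by (cases p) simp

lemma bij_relabel: "bij (relabel V col)"
  by (rule o_bij[where g="relabel V col"]) auto

lemma relabel_image_image: "map_prod (relabel V col) (relabel V col) ` map_prod (relabel V col) (relabel V col) ` S = S"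
  by (simp add: image_comp map_prod.comp comp_def map_prod_def split_def)

lemma relabel_strand_points: "relabel V col ` strand_points E col = strand_points E col"
proof -
  have *: "relabel V col ` strand_points E col \<subseteq> strand_points E col" for V
    by (auto simp: strand_points_def darts_def)
  have "strand_points E col = relabel V col ` relabel V col ` strand_points E col"
    by (simp add: image_comp comp_def)
  also have "\<dots> \<subseteq> relabel V col ` strand_points E col" by (intro image_mono *)
  finally show ?thesis using * by blast
qed

text \<open>Relabelling the strands inside the edge bands amounts to conjugating the
  inserted permutations (the reversal commutes with rflip).\<close>

lemma edge_strands_conj_perms_subset:
  "map_prod (relabel V col) (relabel V col) ` edge_strands E col \<pi> \<subseteq> edge_strands E col (conj_perms V col \<pi>)"
proof (rule image_subsetI)
  fix p assume "p \<in> edge_strands E col \<pi>"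
  then obtain e i where p: "p = (((e, True), i), ((e, False), rflip (col e) (\<pi> e i)))"
    and ei: "e \<in> E" "i < col e" unfolding edge_strands_def by blast
  let ?j = "renumber V col (e, True) i"
  have "(((e, True), ?j), ((e, False), rflip (col e) (conj_perms V col \<pi> e ?j)))
      \<in> edge_strands E col (conj_perms V col \<pi>)"
    unfolding edge_strands_def using ei by auto
  then show "map_prod (relabel V col) (relabel V col) p \<in> edge_strands E col (conj_perms V col \<pi>)"
    by (simp add: p conj_perms_def renumber_rflip)
qed

lemma conj_perms_conj_perms [simp]: "conj_perms V col (conj_perms V col \<pi>) = \<pi>"
  by (intro ext) (simp add: conj_perms_def)

lemma edge_strands_conj_perms:
  "edge_strands E col (conj_perms V col \<pi>) = map_prod (relabel V col) (relabel V col) ` edge_strands E col \<pi>"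
    (is "?S' = ?M ` ?S")
proof
  have "?S' = ?M ` ?M ` ?S'" by (simp only: relabel_image_image)
  also have "\<dots> \<subseteq> ?M ` edge_strands E col (conj_perms V col (conj_perms V col \<pi>))"
    by (intro image_mono edge_strands_conj_perms_subset)
  finally show "?S' \<subseteq> ?M ` ?S" by simp
qed (rule edge_strands_conj_perms_subset)

lemma conj_perms_edge_perms:
  assumes V: "V \<subseteq> darts E" and \<pi>: "\<pi> \<in> edge_perms E col"
  shows "conj_perms V col \<pi> \<in> edge_perms E col"
proof -
  have "conj_perms V col \<pi> e permutes {..<col e}" if "e \<in> E" for e
    using \<pi> that renumber_permutes[of V col "(e, _)"]
    by (auto simp: edge_perms_def conj_perms_def intro!: permutes_compose)
  moreover have "conj_perms V col \<pi> e = id" if "e \<notin> E" for e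
    using \<pi> that V by (auto simp: edge_perms_def conj_perms_def renumber_def darts_def)
  ultimately show ?thesis by (simp add: edge_perms_def)
qed

lemma bij_betw_conj_perms:
  "V \<subseteq> darts E \<Longrightarrow> bij_betw (conj_perms V col) (edge_perms E col) (edge_perms E col)"
  by (rule bij_betwI[where g="conj_perms V col"]) (auto simp: conj_perms_edge_perms)

lemma sign_conj_perms:
  assumes "\<pi> e permutes {..<col e}"
  shows "sign (conj_perms V col \<pi> e) = sign (renumber V col (e, False)) * sign (renumber V col (e, True)) * sign (\<pi> e)"
proof -
  have "permutation (renumber V col (e, b))" for b
    using renumber_permutes[of V col "(e, b)"] by (simp add: permutes_imp_permutation[OF finite_lessThan])
  moreover have "permutation (\<pi> e)" using assms by (simp add: permutes_imp_permutation[OF finite_lessThan])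
  ultimately show ?thesis
    by (simp add: conj_perms_def sign_compose permutation_compose mult_ac)
qed

lemma prod_sign_conj_perms:
  assumes V: "V \<subseteq> darts E" and fin: "finite E" and \<pi>: "\<pi> \<in> edge_perms E col"
  shows "(\<Prod>e\<in>E. sign (conj_perms V col \<pi> e)) =
     (\<Prod>d\<in>V. (-1) ^ (col (fst d) * (col (fst d) - 1) div 2)) * (\<Prod>e\<in>E. sign (\<pi> e))"
proof -
  let ?s = "\<lambda>d. sign (renumber V col d)"
  have "(\<Prod>e\<in>E. sign (conj_perms V col \<pi> e)) = (\<Prod>e\<in>E. ?s (e, False) * ?s (e, True) * sign (\<pi> e))"
    using \<pi> by (intro prod.cong refl) (simp add: edge_perms_def sign_conj_perms)
  also have "\<dots> = (\<Prod>e\<in>E. \<Prod>b\<in>UNIV. ?s (e, b)) * (\<Prod>e\<in>E. sign (\<pi> e))"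
    by (simp add: prod.distrib UNIV_bool mult_ac)
  also have "(\<Prod>e\<in>E. \<Prod>b\<in>UNIV. ?s (e, b)) = (\<Prod>d\<in>darts E. ?s d)"
    unfolding darts_def by (rule prod.cartesian_product'[symmetric])
  also have "(\<Prod>d\<in>darts E. ?s d) = (\<Prod>d\<in>V. ?s d)"
    using fin V by (intro prod.mono_neutral_right) (auto simp: darts_def sign_renumber)
  also have "\<dots> = (\<Prod>d\<in>V. (-1) ^ (col (fst d) * (col (fst d) - 1) div 2))"
    by (intro prod.cong refl) (simp add: sign_renumber)
  finally show ?thesis .
qed

definition triangle :: "nat \<Rightarrow> nat \<Rightarrow> nat \<Rightarrow> bool" where
  "triangle a b c \<longleftrightarrow> even (a + b + c) \<and> \<bar>int a - int b\<bar> \<le> int c \<and> c \<le> a + b"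

lemma triangle_swap: "triangle a c b \<longleftrightarrow> triangle a b c"
  unfolding triangle_def by (auto simp: add_ac)

lemma triangle_arcs_bound: "triangle a b c \<Longrightarrow> k < (a + b - c) div 2 \<Longrightarrow> k < a \<and> k < b"
  unfolding triangle_def by linarith

lemma admissible_iff_triangle:
  "admissible E \<sigma> col \<longleftrightarrow> (\<forall>x\<in>darts E. triangle (col (fst x)) (col (fst (\<sigma> x))) (col (fst (\<sigma> (\<sigma> x)))))"
  by (simp add: admissible_def triangle_def Let_def)

definition vertex_at :: "('e \<times> bool \<Rightarrow> 'e \<times> bool) \<Rightarrow> 'e \<times> bool \<Rightarrow> ('e \<times> bool) set" where
  "vertex_at \<sigma> x = {x, \<sigma> x, \<sigma> (\<sigma> x)}"

lemma reverse_at_apply: "reverse_at \<sigma> x0 x = (if x \<in> vertex_at \<sigma> x0 then \<sigma> (\<sigma> x) else \<sigma> x)"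
  by (simp add: reverse_at_def vertex_at_def)

context
  fixes E :: "'e set" and \<sigma> :: "'e \<times> bool \<Rightarrow> 'e \<times> bool"
  assumes cubic: "cubic_ribbon_graph E \<sigma>"
begin

lemma cubic_permutes: "\<sigma> permutes darts E"
  using cubic by (simp add: cubic_ribbon_graph_def)

lemma cubic_in_darts: "x \<in> darts E \<Longrightarrow> \<sigma> x \<in> darts E"
  by (simp add: permutes_in_image[OF cubic_permutes])

lemma cubic_order3 [simp]: "\<sigma> (\<sigma> (\<sigma> x)) = x"
  using cubic permutes_not_in[OF cubic_permutes, of x] unfolding cubic_ribbon_graph_def
  by (cases "x \<in> darts E") auto

lemma cubic_no_fixpoint: "x \<in> darts E \<Longrightarrow> \<sigma> x \<noteq> x"
  using cubic by (simp add: cubic_ribbon_graph_def)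

lemma cubic_no_fixpoint2: "x \<in> darts E \<Longrightarrow> \<sigma> (\<sigma> x) \<noteq> x"
  using cubic_no_fixpoint cubic_order3 by metis

lemma vertex_at_closed [simp]: "\<sigma> x \<in> vertex_at \<sigma> x0 \<longleftrightarrow> x \<in> vertex_at \<sigma> x0"
  unfolding vertex_at_def by (metis cubic_order3 insert_iff singletonD)

lemma vertex_at_subset_darts: "x0 \<in> darts E \<Longrightarrow> vertex_at \<sigma> x0 \<subseteq> darts E"
  by (simp add: vertex_at_def cubic_in_darts)

lemma vertex_at_reverse_at: "vertex_at (reverse_at \<sigma> x0) x0 = vertex_at \<sigma> x0"
  by (auto simp: vertex_at_def reverse_at_def)

lemma reverse_at_reverse_at: "reverse_at (reverse_at \<sigma> x0) x0 = \<sigma>"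
proof
  fix x
  show "reverse_at (reverse_at \<sigma> x0) x0 x = \<sigma> x"
    by (simp add: reverse_at_apply[of "reverse_at \<sigma> x0"] vertex_at_reverse_at)
      (simp add: reverse_at_apply)
qed

lemma cubic_reverse_at:
  assumes x0: "x0 \<in> darts E"
  shows "cubic_ribbon_graph E (reverse_at \<sigma> x0)"
proof -
  let ?r = "reverse_at \<sigma> x0"
  have order3: "?r (?r (?r x)) = x" for x
    by (simp add: reverse_at_apply)
  have maps: "?r x \<in> darts E" if "x \<in> darts E" for x
    using that by (simp add: reverse_at_apply cubic_in_darts)
  have "bij_betw ?r (darts E) (darts E)"
    by (rule bij_betwI[where g="\<lambda>x. ?r (?r x)"]) (simp_all add: maps order3)
  moreover have "?r x = x" if "x \<notin> darts E" for x
    using that vertex_at_subset_darts[OF x0] permutes_not_in[OF cubic_permutes that]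
    by (auto simp: reverse_at_apply)
  ultimately have "?r permutes darts E" by (rule bij_imp_permutes)
  moreover have "?r x \<noteq> x" if "x \<in> darts E" for x
    using that cubic_no_fixpoint cubic_no_fixpoint2 by (simp add: reverse_at_apply)
  ultimately show ?thesis using cubic order3 by (simp add: cubic_ribbon_graph_def)
qed

text \<open>Reversal preserves admissibility (the triangle condition is symmetric), the
  vertex set, and the numbers of arcs at each vertex up to the order of the darts.\<close>

lemma admissible_reverse_at_iff: "admissible E (reverse_at \<sigma> x0) col \<longleftrightarrow> admissible E \<sigma> col"
proof -
  have "triangle (col (fst x)) (col (fst (reverse_at \<sigma> x0 x))) (col (fst (reverse_at \<sigma> x0 (reverse_at \<sigma> x0 x))))
    \<longleftrightarrow> triangle (col (fst x)) (col (fst (\<sigma> x))) (col (fst (\<sigma> (\<sigma> x))))" for x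
    by (simp add: reverse_at_apply triangle_swap)
  then show ?thesis by (simp add: admissible_iff_triangle)
qed

lemma vertices_reverse_at: "vertices E (reverse_at \<sigma> x0) = vertices E \<sigma>"
  unfolding vertices_def
proof (rule image_cong[OF refl])
  fix x
  show "{x, reverse_at \<sigma> x0 x, reverse_at \<sigma> x0 (reverse_at \<sigma> x0 x)} = {x, \<sigma> x, \<sigma> (\<sigma> x)}"
    by (auto simp: reverse_at_apply)
qed

lemma arcs_reverse_at_outside:
  assumes "x \<notin> vertex_at \<sigma> x0"
  shows "arcs (reverse_at \<sigma> x0) col x = arcs \<sigma> col x"
  using assms by (simp add: arcs_def reverse_at_apply)

lemma arcs_reverse_at_inside:
  assumes "x \<in> vertex_at \<sigma> x0"
  shows "arcs (reverse_at \<sigma> x0) col (\<sigma> x) = arcs \<sigma> col x"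
  using assms by (simp add: arcs_def reverse_at_apply add.commute)

lemma I_fact_reverse_at: "I_fact E (reverse_at \<sigma> x0) col = I_fact E \<sigma> col"
  unfolding I_fact_def vertices_reverse_at
proof (rule prod.cong[OF refl])
  fix v assume "v \<in> vertices E \<sigma>"
  then obtain y where v: "v = vertex_at \<sigma> y" unfolding vertices_def vertex_at_def by blast
  have inside: "x \<in> vertex_at \<sigma> x0 \<longleftrightarrow> y \<in> vertex_at \<sigma> x0" if "x \<in> v" for x
    using that by (auto simp: v vertex_at_def[of \<sigma> y])
  show "(\<Prod>x\<in>v. fact (arcs (reverse_at \<sigma> x0) col x)) = (\<Prod>x\<in>v. fact (arcs \<sigma> col x))"
  proof (cases "y \<in> vertex_at \<sigma> x0")
    case True
    have "\<sigma> ` v = v" by (auto simp: v vertex_at_def image_iff)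
    then have "bij_betw \<sigma> v v"
      using permutes_inj[OF cubic_permutes] by (simp add: bij_betw_def inj_on_subset[OF _ subset_UNIV])
    then have "(\<Prod>x\<in>v. fact (arcs (reverse_at \<sigma> x0) col x)) = (\<Prod>x\<in>v. fact (arcs (reverse_at \<sigma> x0) col (\<sigma> x)))"
      by (rule prod.reindex_bij_betw[symmetric])
    also have "\<dots> = (\<Prod>x\<in>v. fact (arcs \<sigma> col x))"
      using True inside by (intro prod.cong refl) (simp add: arcs_reverse_at_inside)
    finally show ?thesis .
  next
    case False
    then show ?thesis
      using inside by (intro prod.cong refl) (simp add: arcs_reverse_at_outside)
  qed
qed

lemma prod_vertex_at:
  "x0 \<in> darts E \<Longrightarrow> (\<Prod>d\<in>vertex_at \<sigma> x0. f d) = f x0 * f (\<sigma> x0) * f (\<sigma> (\<sigma> x0))"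
  for f :: "'e \<times> bool \<Rightarrow> 'a::comm_monoid_mult"
  using cubic_no_fixpoint[of x0] cubic_no_fixpoint2[of x0] cubic_no_fixpoint[of "\<sigma> x0"] cubic_in_darts[of x0]
  by (simp add: vertex_at_def mult_ac)

lemma vertex_arcs_relabel_subset:
  assumes adm: "admissible E \<sigma> col"
  shows "map_prod (relabel (vertex_at \<sigma> x0) col) (relabel (vertex_at \<sigma> x0) col) ` vertex_arcs E \<sigma> col
     \<subseteq> vertex_arcs E (reverse_at \<sigma> x0) col \<union> (vertex_arcs E (reverse_at \<sigma> x0) col)\<inverse>"
proof (rule image_subsetI)
  let ?V = "vertex_at \<sigma> x0" and ?r = "reverse_at \<sigma> x0"
  fix p assume "p \<in> vertex_arcs E \<sigma> col"
  then obtain x k where p: "p = ((x, col (fst x) - 1 - k), (\<sigma> x, k))"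
    and x: "x \<in> darts E" and k: "k < arcs \<sigma> col x"
    unfolding vertex_arcs_def by blast
  have "triangle (col (fst x)) (col (fst (\<sigma> x))) (col (fst (\<sigma> (\<sigma> x))))"
    using adm x by (simp add: admissible_iff_triangle)
  then have "k < col (fst x) \<and> k < col (fst (\<sigma> x))"
    using k triangle_arcs_bound by (simp add: arcs_def)
  then have image: "map_prod (relabel ?V col) (relabel ?V col) p
      = (if x \<in> ?V then ((x, k), (\<sigma> x, col (fst (\<sigma> x)) - 1 - k)) else p)"
    using vertex_at_closed[of x x0] by (cases x) (auto simp: p renumber_def rflip_def)
  show "map_prod (relabel ?V col) (relabel ?V col) p \<in> vertex_arcs E ?r col \<union> (vertex_arcs E ?r col)\<inverse>"
  proof (cases "x \<in> ?V")
    case True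
    then have "?r (\<sigma> x) = x" by (simp add: reverse_at_apply)
    moreover have "((\<sigma> x, col (fst (\<sigma> x)) - 1 - k), (?r (\<sigma> x), k)) \<in> vertex_arcs E ?r col"
      unfolding vertex_arcs_def mem_Collect_eq using x k True
      by (intro exI[of _ "\<sigma> x"] exI[of _ k]) (simp add: cubic_in_darts arcs_reverse_at_inside)
    ultimately show ?thesis using True image by simp
  next
    case False
    then have "p \<in> vertex_arcs E ?r col"
      unfolding vertex_arcs_def mem_Collect_eq using x k
      by (intro exI[of _ x] exI[of _ k]) (simp add: p arcs_reverse_at_outside reverse_at_apply)
    then show ?thesis using False image by simp
  qed
qed

end

text \<open>Applying the inclusion also to the reversed graph (reversal is an involution,
  relabelling too) gives equality of the symmetric closures.\<close>

lemma vertex_arcs_relabel: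
  assumes cubic: "cubic_ribbon_graph E \<sigma>" and x0: "x0 \<in> darts E" and adm: "admissible E \<sigma> col"
  shows "vertex_arcs E (reverse_at \<sigma> x0) col \<union> (vertex_arcs E (reverse_at \<sigma> x0) col)\<inverse>
       = map_prod (relabel (vertex_at \<sigma> x0) col) (relabel (vertex_at \<sigma> x0) col)
           ` (vertex_arcs E \<sigma> col \<union> (vertex_arcs E \<sigma> col)\<inverse>)"
    (is "?S' = ?M ` ?S")
proof
  show "?M ` ?S \<subseteq> ?S'"
    using vertex_arcs_relabel_subset[OF cubic adm, of x0]
    unfolding image_Un map_prod_converse by blast
  have "?M ` vertex_arcs E (reverse_at \<sigma> x0) col \<subseteq> ?S"
    using vertex_arcs_relabel_subset[OF cubic_reverse_at[OF cubic x0], of col x0]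
    by (simp add: adm admissible_reverse_at_iff[OF cubic] reverse_at_reverse_at[OF cubic]
        vertex_at_reverse_at[OF cubic])
  then have "?M ` ?S' \<subseteq> ?S"
    unfolding image_Un map_prod_converse by blast
  then have "?M ` ?M ` ?S' \<subseteq> ?M ` ?S" by (rule image_mono)
  then show "?S' \<subseteq> ?M ` ?S" by (simp only: relabel_image_image)
qed

lemma num_loops_reverse_at:
  assumes cubic: "cubic_ribbon_graph E \<sigma>" and x0: "x0 \<in> darts E" and adm: "admissible E \<sigma> col"
  shows "num_loops E (reverse_at \<sigma> x0) col (conj_perms (vertex_at \<sigma> x0) col \<pi>) = num_loops E \<sigma> col \<pi>"
proof -
  let ?f = "relabel (vertex_at \<sigma> x0) col"
  let ?M = "map_prod ?f ?f"
  let ?R = "edge_strands E col \<pi> \<union> vertex_arcs E \<sigma> col"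
  let ?R' = "edge_strands E col (conj_perms (vertex_at \<sigma> x0) col \<pi>) \<union> vertex_arcs E (reverse_at \<sigma> x0) col"
  have "?R' \<union> ?R'\<inverse> = ?M ` (?R \<union> ?R\<inverse>)"
    using vertex_arcs_relabel[OF cubic x0 adm]
    by (simp add: edge_strands_conj_perms image_Un map_prod_converse) blast
  then have "card (strand_points E col // (?R' \<union> ?R'\<inverse>)\<^sup>*)
      = card ((?f ` strand_points E col) // (?M ` ((?R \<union> ?R\<inverse>)\<^sup>*)))"
    by (simp only: rtrancl_image_bij[OF bij_relabel] relabel_strand_points)
  also have "\<dots> = card (strand_points E col // (?R \<union> ?R\<inverse>)\<^sup>*)"
    by (rule card_quotient_image_bij[OF bij_relabel])
  finally show ?thesis by (simp add: num_loops_def Let_def)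
qed

lemma penrose_sum_reverse_at:
  assumes cubic: "cubic_ribbon_graph E \<sigma>" and x0: "x0 \<in> darts E" and adm: "admissible E \<sigma> col"
  shows "(\<Sum>\<pi>\<in>edge_perms E col. (\<Prod>e\<in>E. sign (\<pi> e)) * (-2) ^ num_loops E (reverse_at \<sigma> x0) col \<pi>)
    = (\<Prod>d\<in>vertex_at \<sigma> x0. (-1) ^ (col (fst d) * (col (fst d) - 1) div 2))
      * (\<Sum>\<pi>\<in>edge_perms E col. (\<Prod>e\<in>E. sign (\<pi> e)) * (-2) ^ num_loops E \<sigma> col \<pi>)"
proof -
  let ?V = "vertex_at \<sigma> x0"
  let ?h = "\<lambda>\<pi>. (\<Prod>e\<in>E. sign (\<pi> e)) * (-2::int) ^ num_loops E (reverse_at \<sigma> x0) col \<pi>"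
  have V: "?V \<subseteq> darts E" by (rule vertex_at_subset_darts[OF cubic x0])
  have fin: "finite E" using cubic by (simp add: cubic_ribbon_graph_def)
  have "(\<Sum>\<pi>\<in>edge_perms E col. ?h \<pi>) = (\<Sum>\<pi>\<in>edge_perms E col. ?h (conj_perms ?V col \<pi>))"
    by (rule sum.reindex_bij_betw[OF bij_betw_conj_perms[OF V], symmetric])
  also have "\<dots> = (\<Sum>\<pi>\<in>edge_perms E col. (\<Prod>d\<in>?V. (-1) ^ (col (fst d) * (col (fst d) - 1) div 2))
      * ((\<Prod>e\<in>E. sign (\<pi> e)) * (-2) ^ num_loops E \<sigma> col \<pi>))"
    by (intro sum.cong refl) (simp add: prod_sign_conj_perms[OF V fin] num_loops_reverse_at[OF cubic x0 adm])
  finally show ?thesis by (simp add: sum_distrib_left)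
qed

lemma sign_at_vertex:
  assumes cubic: "cubic_ribbon_graph E \<sigma>" and x0: "x0 \<in> darts E"
    and "a = col (fst x0)" "b = col (fst (\<sigma> x0))" "c = col (fst (\<sigma> (\<sigma> x0)))"
  shows "(\<Prod>d\<in>vertex_at \<sigma> x0. (-1::int) ^ (col (fst d) * (col (fst d) - 1) div 2))
    = (-1) ^ ((a * (a - 1) + b * (b - 1) + c * (c - 1)) div 2)"
proof -
  have "even (n * (n - 1))" for n :: nat by auto
  then have "(a * (a - 1) + b * (b - 1) + c * (c - 1)) div 2
      = a * (a - 1) div 2 + b * (b - 1) div 2 + c * (c - 1) div 2"
    by (auto elim!: evenE)
  then show ?thesis
    using assms by (simp add: prod_vertex_at power_add)
qed

theorem lemma6p1:
  fixes E :: "'e set" and \<sigma> :: "'e \<times> bool \<Rightarrow> 'e \<times> bool" and col :: "'e \<Rightarrow> nat"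
    and circ :: "nat list" and x0 :: "'e \<times> bool" and a b c :: nat
  assumes "cubic_ribbon_graph E \<sigma>"
    and "x0 \<in> darts E"
    and "a = col (fst x0)" and "b = col (fst (\<sigma> x0))" and "c = col (fst (\<sigma> (\<sigma> x0)))"
  shows "penrose_eval E (reverse_at \<sigma> x0) col circ
           = (-1) ^ ((a * (a - 1) + b * (b - 1) + c * (c - 1)) div 2) * penrose_eval E \<sigma> col circ
       \<and> std_eval E (reverse_at \<sigma> x0) col circ
           = (-1) ^ ((a * (a - 1) + b * (b - 1) + c * (c - 1)) div 2) * std_eval E \<sigma> col circ"
proof -
  note cubic = assms(1) and x0 = assms(2)
  let ?s = "(-1::int) ^ ((a * (a - 1) + b * (b - 1) + c * (c - 1)) div 2)"
  have adm: "admissible E (reverse_at \<sigma> x0) col \<longleftrightarrow> admissible E \<sigma> col"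
    by (rule admissible_reverse_at_iff[OF cubic])
  have penrose: "penrose_eval E (reverse_at \<sigma> x0) col circ = ?s * penrose_eval E \<sigma> col circ"
    using adm penrose_sum_reverse_at[OF cubic x0] sign_at_vertex[OF assms]
    by (simp add: penrose_eval_def)
  then have "std_eval E (reverse_at \<sigma> x0) col circ = of_int ?s * std_eval E \<sigma> col circ"
    using adm by (simp add: std_eval_def I_fact_reverse_at[OF cubic])
  with penrose show ?thesis by simp
qed

end
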